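(* Let $n>k\geq 1$ be integers, $r=n-k$, and let $k<d_1<d_2<\cdots<d_m\leq n-1$ be integers. Put $s_i=d_i-k+1$ for $i\in[m]$, $s=\mathrm{lcm}(s_1,\ldots,s_{m-1})$ (with $s=1$ if $m=1$), and $\ell=s\cdot s_m^n$. Let $F$ be a finite field with $|F|\geq s_m n$ and let $\lambda_{i,j}$, $i\in[n]$, $j\in[0,s_m-1]$, be $s_m n$ distinct elements of $F$. Let $\mathcal{C}_1$ be the set of all $(\bm c_1,\ldots,\bm c_n)$ with $\bm c_i=(c_{i,0},\ldots,c_{i,\ell-1})\in F^\ell$ satisfying $$\sum_{i=1}^n \lambda_{i,a_i}^{t-1} c_{i,(a,b)}=0\quad\text{for all } a\in[0,s_m^n-1],\ b\in[0,s-1],\ t\in[r].$$ Then $\mathcal{C}_1$ is an $(n,k,\ell)$ MDS array code satisfying the $(1,d_i)$-optimal repair property for every $i\in[m]$ simultaneously.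
   Context: Notation: $[n]=\{1,\ldots,n\}$ and $[i,j]=\{i,i+1,\ldots,j\}$. Each $\tau\in[0,\ell-1]$ is written uniquely as $\tau=b\cdot s_m^n+\sum_{i=1}^n a_i s_m^{i-1}$ with $b\in[0,s-1]$, $a_i\in[0,s_m-1]$; we write $a=(a_1,\ldots,a_n)=\sum_i a_i s_m^{i-1}\in[0,s_m^n-1]$ and $\tau=(a,b)$, so $c_{i,(a,b)}=c_{i,\tau}$. An $(n,k,\ell)$ MDS array code over $F$ is an $F$-linear set of vectors $(\bm c_1,\ldots,\bm c_n)$, $\bm c_i\in F^\ell$ (node $i$ stores $\bm c_i$), of dimension $k\ell$, such that any $k$ of the coordinates $\bm c_i$ determine the whole codeword. For $1\leq h\leq n-k$ and $k\leq d\leq n-h$, the code has the $(h,d)$-optimal repair property if for every $h$-subset $\mathcal{H}\subseteq[n]$ of failed nodes and every $d$-subset $\mathcal{R}\subseteq[n]\setminus\mathcal{H}$ of helper nodes, there is a scheme in which each helper $j\in\mathcal{R}$ sends $\beta=\frac{h\ell}{d-k+h}$ symbols of $F$ computed from $\bm c_j$ and from these $d\beta=\frac{dh\ell}{d-k+h}$ symbols in total all $\bm c_i$, $i\in\mathcal{H}$, can be determined, for every codeword (this meets the cut-set bound $\beta\geq \frac{h\ell}{d-k+h}$ with equality). For $h=1$ this is the MSR (optimal single-node repair) property with repair degree $d$. *)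

theory Defs
  imports Complex_Main "HOL-Library.Function_Algebras"
begin

text \<open>Array codewords over a field 'a: a codeword is c :: nat => nat => 'a, where
  c i t is the t-th symbol c_{i,t} stored on node i (nodes 1..n, symbols 0..ell-1);
  entries outside this range are required to be 0.  Vector space structure: pointwise.\<close>

definition arr_scale :: "'a::field \<Rightarrow> (nat \<Rightarrow> nat \<Rightarrow> 'a) \<Rightarrow> (nat \<Rightarrow> nat \<Rightarrow> 'a)" where
  "arr_scale x c = (\<lambda>i t. x * c i t)"

lemma vector_space_arr_scale: "vector_space (arr_scale :: 'a::field \<Rightarrow> _)"
  by unfold_locales (auto simp: arr_scale_def fun_eq_iff algebra_simps)

definition array_vectors :: "nat \<Rightarrow> nat \<Rightarrow> (nat \<Rightarrow> nat \<Rightarrow> 'a::zero) set" where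
  "array_vectors n ell = {c. \<forall>i t. (i \<notin> {1..n} \<or> ell \<le> t) \<longrightarrow> c i t = 0}"

definition MDS_array_code :: "nat \<Rightarrow> nat \<Rightarrow> nat \<Rightarrow> (nat \<Rightarrow> nat \<Rightarrow> 'a::field) set \<Rightarrow> bool" where
  "MDS_array_code n k ell C \<longleftrightarrow>
     C \<subseteq> array_vectors n ell \<and>
     module.subspace arr_scale C \<and>
     vector_space.dim arr_scale C = k * ell \<and>
     (\<forall>K. K \<subseteq> {1..n} \<and> card K = k \<longrightarrow>
        (\<forall>c\<in>C. \<forall>c'\<in>C. (\<forall>i\<in>K. c i = c' i) \<longrightarrow> c = c'))"

text \<open>(h,d)-optimal repair: for every h-set H of failed nodes and d-set R of helpers disjoint
  from H, each helper j sends beta = h*ell/(d-k+h) symbols f j (c j) 0, ..., f j (c j) (beta-1),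
  computed from c_j alone, and from these all c_i, i in H, are determined (via g).\<close>
definition optimal_repair :: "nat \<Rightarrow> nat \<Rightarrow> nat \<Rightarrow> (nat \<Rightarrow> nat \<Rightarrow> 'a::zero) set \<Rightarrow> nat \<Rightarrow> nat \<Rightarrow> bool" where
  "optimal_repair n k ell C h d \<longleftrightarrow>
     (\<forall>H R. H \<subseteq> {1..n} \<and> card H = h \<and> R \<subseteq> {1..n} - H \<and> card R = d \<longrightarrow>
        (\<exists>(f :: nat \<Rightarrow> (nat \<Rightarrow> 'a) \<Rightarrow> (nat \<Rightarrow> 'a)) (g :: (nat \<Rightarrow> nat \<Rightarrow> 'a) \<Rightarrow> nat \<Rightarrow> nat \<Rightarrow> 'a).
           \<forall>c\<in>C. \<forall>i\<in>H.
             c i = g (\<lambda>j u. if j \<in> R \<and> u < h * ell div (d - k + h) then f j (c j) u else 0) i))"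

text \<open>i-th base-q digit a_i (i \<ge> 1) of a = sum a_i q^(i-1).\<close>
definition digit :: "nat \<Rightarrow> nat \<Rightarrow> nat \<Rightarrow> nat" where
  "digit q a i = (a div q ^ (i - 1)) mod q"

end

theory Submission
  imports Defs "HOL-Computational_Algebra.Polynomial" "HOL-Library.FuncSet"
begin

(* Each layer t = (a, b) of a codeword satisfies the n - k parity checks of a generalized
   Reed-Solomon code with the pairwise distinct evaluation points lambda_{i,a_i}.  By the
   Vandermonde argument any k nodes of a layer determine the others and can be prescribed
   freely; this gives the MDS property and the dimension k * ell.

   To repair node h from d helpers let s' = d - k + 1, a divisor of s * s_m.  Group the layers
   by the digits a_j, j ~= h, and by the block of s' consecutive values of b * s_m + a_h that
   contains (b, a_h); there are ell / s' groups, and every helper sends the sum of its symbols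
   over each group.  On a group the points lambda_{j,a_j}, j ~= h, are constant, so the sum of
   the parity checks over the group is a Vandermonde system in the at most s' symbols of
   node h (distinct points lambda_{h,a_h}) and the group sums of the n - 1 - d non-helpers:
   at most n - k unknowns in n - k equations, hence uniquely solvable. *)

section \<open>Vandermonde systems\<close>

lemma vandermonde_kernel_eq_0:
  fixes z w :: "'b \<Rightarrow> 'a::field"
  assumes P: "finite P" and inj: "inj_on z P" and card: "card P \<le> r"
    and kernel: "\<And>\<tau>. \<tau> < r \<Longrightarrow> (\<Sum>p\<in>P. z p ^ \<tau> * w p) = 0" and q: "q \<in> P"
  shows "w q = 0"
proof -
  \<comment> \<open>Q vanishes at the other points but not at z q; its coefficients combine the equations.\<close>
  define Q where "Q = (\<Prod>p\<in>P - {q}. [:- z p, 1:])"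
  have "degree Q \<le> card (P - {q})"
    unfolding Q_def using degree_prod_sum_le[of "P - {q}" "\<lambda>p. [:- z p, 1:]"] P by (simp add: o_def)
  also have "\<dots> < r"
    using card_Diff1_less[OF P q] card by simp
  finally have deg: "degree Q < r" .
  have poly_Q: "poly Q x = (\<Sum>\<tau><r. coeff Q \<tau> * x ^ \<tau>)" for x
    unfolding poly_altdef using deg
    by (intro sum.mono_neutral_left) (auto simp: coeff_eq_0)
  have "poly Q (z q) * w q = (\<Sum>p\<in>{q}. poly Q (z p) * w p)"
    by simp
  also have "\<dots> = (\<Sum>p\<in>P. poly Q (z p) * w p)"
    using P q by (intro sum.mono_neutral_left) (auto simp: Q_def poly_prod)
  also have "\<dots> = (\<Sum>\<tau><r. coeff Q \<tau> * (\<Sum>p\<in>P. z p ^ \<tau> * w p))"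
    by (simp add: poly_Q sum_distrib_left sum_distrib_right sum.swap[of _ P] mult.assoc)
  also have "\<dots> = 0"
    using kernel by simp
  finally show ?thesis
    using P inj q by (auto simp: Q_def poly_prod inj_on_def)
qed

lemma vandermonde_surj:
  fixes z :: "'b \<Rightarrow> 'a::{field,finite}"
  assumes P: "finite P" and inj: "inj_on z P" and card: "card P = r"
  shows "\<exists>w. \<forall>\<tau><r. (\<Sum>p\<in>P. z p ^ \<tau> * w p) = y \<tau>"
proof -
  define V where "V w = restrict (\<lambda>\<tau>. \<Sum>p\<in>P. z p ^ \<tau> * w p) {..<r}" for w
  have "inj_on V (P \<rightarrow>\<^sub>E UNIV)"
  proof (rule inj_onI)
    fix w w' assume w: "w \<in> P \<rightarrow>\<^sub>E UNIV" and w': "w' \<in> P \<rightarrow>\<^sub>E UNIV" and "V w = V w'"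
    have "(\<Sum>p\<in>P. z p ^ \<tau> * w p) = (\<Sum>p\<in>P. z p ^ \<tau> * w' p)" if "\<tau> < r" for \<tau>
      using that arg_cong[OF \<open>V w = V w'\<close>, of "\<lambda>f. f \<tau>"] by (simp add: V_def)
    then have kernel: "(\<Sum>p\<in>P. z p ^ \<tau> * (w p - w' p)) = 0" if "\<tau> < r" for \<tau>
      using that by (simp add: right_diff_distrib sum_subtractf)
    have "w p - w' p = 0" if "p \<in> P" for p
      using vandermonde_kernel_eq_0[OF P inj, of r "\<lambda>p. w p - w' p"] kernel card that by simp
    then show "w = w'"
      by (intro PiE_ext[OF w w']) simp
  qed
  then have "card (V ` (P \<rightarrow>\<^sub>E UNIV)) = card ({..<r} \<rightarrow>\<^sub>E (UNIV :: 'a set))"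
    using P card by (simp add: card_image card_PiE)
  moreover have "V ` (P \<rightarrow>\<^sub>E UNIV) \<subseteq> {..<r} \<rightarrow>\<^sub>E UNIV"
    unfolding V_def by (intro image_subsetI) (simp add: restrict_PiE_iff)
  ultimately have "V ` (P \<rightarrow>\<^sub>E UNIV) = {..<r} \<rightarrow>\<^sub>E UNIV"
    by (intro card_subset_eq) (auto intro: finite_PiE)
  then have "restrict y {..<r} \<in> V ` (P \<rightarrow>\<^sub>E UNIV)"
    by simp
  then obtain w where w: "V w = restrict y {..<r}"
    by (auto simp: eq_commute[of "restrict y {..<r}"])
  have "(\<Sum>p\<in>P. z p ^ \<tau> * w p) = y \<tau>" if "\<tau> < r" for \<tau>
    using that arg_cong[OF w, of "\<lambda>f. f \<tau>"] by (simp add: V_def)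
  then show ?thesis
    by blast
qed

section \<open>Vandermonde array codes\<close>

lemma sum_fun_apply: "(\<Sum>x\<in>A. f x) y = (\<Sum>x\<in>A. f x y)"
  by (induction A rule: infinite_finite_induct) auto

lemma sum_unit_arrays_apply:
  assumes S: "finite S"
    and unit: "\<And>p i t. p \<in> S \<Longrightarrow> (i, t) \<in> S \<Longrightarrow> b p i t = (if (i, t) = p then 1 else 0)"
    and "(i, t) \<in> S"
  shows "(\<Sum>p\<in>S. arr_scale (x p) (b p)) i t = (x (i, t) :: 'a::field)"
proof -
  have "(\<Sum>p\<in>S. arr_scale (x p) (b p)) i t = (\<Sum>p\<in>S. x p * b p i t)"
    by (simp add: sum_fun_apply arr_scale_def)
  also have "\<dots> = (\<Sum>p\<in>S. if p = (i, t) then x p else 0)"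
    using \<open>(i, t) \<in> S\<close> by (intro sum.cong) (auto simp: unit)
  also have "\<dots> = x (i, t)"
    using S \<open>(i, t) \<in> S\<close> by simp
  finally show ?thesis .
qed

lemma
  fixes b :: "nat \<times> nat \<Rightarrow> nat \<Rightarrow> nat \<Rightarrow> 'a::field"
  assumes S: "finite S"
    and unit: "\<And>p i t. p \<in> S \<Longrightarrow> (i, t) \<in> S \<Longrightarrow> b p i t = (if (i, t) = p then 1 else 0)"
  shows inj_on_unit_arrays: "inj_on b S"
    and independent_unit_arrays: "\<not> module.dependent arr_scale (b ` S)"
proof -
  interpret vs: vector_space "arr_scale :: 'a \<Rightarrow> _"
    by (rule vector_space_arr_scale)
  show inj: "inj_on b S"
  proof (rule inj_onI)
    fix p p' assume "p \<in> S" "p' \<in> S" "b p = b p'"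
    then show "p = p'"
      using unit[of p "fst p" "snd p"] unit[of p' "fst p" "snd p"] by (auto split: if_splits)
  qed
  show "vs.independent (b ` S)"
  proof
    assume "vs.dependent (b ` S)"
    then obtain u where u: "\<exists>v\<in>b ` S. u v \<noteq> 0" and "(\<Sum>v\<in>b ` S. arr_scale (u v) v) = 0"
      unfolding vs.dependent_finite[OF finite_imageI[OF S]] by blast
    then have "(\<Sum>p\<in>S. arr_scale (u (b p)) (b p)) = 0"
      by (simp add: sum.reindex[OF inj])
    then have "u (b p) = 0" if "p \<in> S" for p
      using sum_unit_arrays_apply[OF S unit, of "fst p" "snd p" "\<lambda>p. u (b p)"] that by simp
    then show False
      using u by auto
  qed
qed

lemma dim_eq_card_information_set:
  fixes C :: "(nat \<Rightarrow> nat \<Rightarrow> 'a::field) set" and S :: "(nat \<times> nat) set"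
  assumes C: "module.subspace arr_scale C" and S: "finite S"
    and zero_on_S: "\<And>c. c \<in> C \<Longrightarrow> (\<And>i t. (i, t) \<in> S \<Longrightarrow> c i t = 0) \<Longrightarrow> c = 0"
    and unit: "\<And>p. p \<in> S \<Longrightarrow> \<exists>b\<in>C. \<forall>(i, t)\<in>S. b i t = (if (i, t) = p then 1 else 0)"
  shows "vector_space.dim arr_scale C = card S"
proof -
  interpret vs: vector_space arr_scale
    by (rule vector_space_arr_scale)
  have "\<forall>p\<in>S. \<exists>b. b \<in> C \<and> (\<forall>i t. (i, t) \<in> S \<longrightarrow> b i t = (if (i, t) = p then 1 else 0))"
    using unit by fastforce
  from bchoice[OF this] obtain b where
    "\<forall>p\<in>S. b p \<in> C \<and> (\<forall>i t. (i, t) \<in> S \<longrightarrow> b p i t = (if (i, t) = p then 1 else 0))"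
    by blast
  then have b: "\<And>p. p \<in> S \<Longrightarrow> b p \<in> C"
    and b_unit: "\<And>p i t. p \<in> S \<Longrightarrow> (i, t) \<in> S \<Longrightarrow> b p i t = (if (i, t) = p then 1 else 0)"
    by auto
  have "C \<subseteq> vs.span (b ` S)"
  proof
    fix c assume c: "c \<in> C"
    define c' where "c' = (\<Sum>p\<in>S. arr_scale (c (fst p) (snd p)) (b p))"
    have "c' \<in> C"
      unfolding c'_def using C b by (intro vs.subspace_sum vs.subspace_scale) auto
    then have "c - c' = 0"
      using c C by (intro zero_on_S vs.subspace_diff) (auto simp: c'_def sum_unit_arrays_apply[OF S b_unit])
    moreover have "c' \<in> vs.span (b ` S)"
      unfolding c'_def by (intro vs.span_sum vs.span_scale vs.span_base) auto
    ultimately show "c \<in> vs.span (b ` S)"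
      by simp
  qed
  then show ?thesis
    using b inj_on_unit_arrays[OF S b_unit] independent_unit_arrays[OF S b_unit]
    by (intro vs.dim_unique[of "b ` S"]) (auto simp: card_image)
qed

definition vandermonde_array_code :: "nat \<Rightarrow> nat \<Rightarrow> nat \<Rightarrow> (nat \<Rightarrow> nat \<Rightarrow> 'a::field) \<Rightarrow> (nat \<Rightarrow> nat \<Rightarrow> 'a) set" where
  "vandermonde_array_code n r ell z =
     {c \<in> array_vectors n ell. \<forall>t<ell. \<forall>\<tau><r. (\<Sum>i=1..n. z t i ^ \<tau> * c i t) = 0}"

lemma vandermonde_array_code_subspace:
  "module.subspace arr_scale (vandermonde_array_code n r ell z)"
proof -
  interpret vs: vector_space arr_scale
    by (rule vector_space_arr_scale)
  show ?thesis
    unfolding vs.subspace_def vandermonde_array_code_def array_vectors_def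
    by (auto simp: arr_scale_def distrib_left sum.distrib mult.left_commute[of _ "_ :: 'a"]
        simp flip: sum_distrib_left)
qed

lemma vandermonde_array_code_eq_0:
  assumes c: "c \<in> vandermonde_array_code n r ell z"
    and z: "\<And>t. t < ell \<Longrightarrow> inj_on (z t) {1..n}"
    and K: "K \<subseteq> {1..n}" "n \<le> card K + r"
    and zero_on_K: "\<And>i t. i \<in> K \<Longrightarrow> t < ell \<Longrightarrow> c i t = 0"
  shows "c = 0"
proof -
  have "c i t = 0" for i t
  proof (cases "i \<in> {1..n} - K \<and> t < ell")
    case True
    define P where "P = {1..n} - K"
    have card_P: "card P \<le> r"
      using K by (simp add: P_def card_Diff_subset finite_subset)
    have "(\<Sum>p\<in>P. z t p ^ \<tau> * c p t) = 0" if "\<tau> < r" for \<tau>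
    proof -
      have "(\<Sum>p\<in>P. z t p ^ \<tau> * c p t) = (\<Sum>p=1..n. z t p ^ \<tau> * c p t)"
        unfolding P_def using K True zero_on_K by (intro sum.mono_neutral_left) auto
      then show ?thesis
        using c True that by (simp add: vandermonde_array_code_def)
    qed
    moreover have "inj_on (z t) P"
      using True by (intro inj_on_subset[OF z]) (auto simp: P_def)
    ultimately show ?thesis
      using vandermonde_kernel_eq_0[of P "z t" r "\<lambda>p. c p t" i] True card_P by (simp add: P_def)
  next
    case False
    then show ?thesis
      using c zero_on_K K(1)
      by (cases "t < ell") (auto simp: vandermonde_array_code_def array_vectors_def)
  qed
  then show ?thesis
    by (simp add: fun_eq_iff)
qed

lemma vandermonde_array_code_extend:
  fixes z :: "nat \<Rightarrow> nat \<Rightarrow> 'a::{field,finite}"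
  assumes z: "\<And>t. t < ell \<Longrightarrow> inj_on (z t) {1..n}"
    and K: "K \<subseteq> {1..n}" "card K + r = n"
  shows "\<exists>c\<in>vandermonde_array_code n r ell z. \<forall>i\<in>K. \<forall>t<ell. c i t = v i t"
proof -
  define P where "P = {1..n} - K"
  have card_P: "card P = r"
    using K by (simp add: P_def card_Diff_subset finite_subset)
  have "\<exists>w. \<forall>\<tau><r. (\<Sum>p\<in>P. z t p ^ \<tau> * w p) = - (\<Sum>i\<in>K. z t i ^ \<tau> * v i t)" if "t < ell" for t
    using z[OF that] card_P by (intro vandermonde_surj) (auto simp: P_def inj_on_subset)
  then obtain w where w: "\<And>t \<tau>. t < ell \<Longrightarrow> \<tau> < r \<Longrightarrow>
      (\<Sum>p\<in>P. z t p ^ \<tau> * w t p) = - (\<Sum>i\<in>K. z t i ^ \<tau> * v i t)"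
    by metis
  define c where "c i t = (if i \<in> {1..n} \<and> t < ell then if i \<in> K then v i t else w t i else 0)" for i t
  have "(\<Sum>i=1..n. z t i ^ \<tau> * c i t) = 0" if "t < ell" "\<tau> < r" for t \<tau>
  proof -
    have "(\<Sum>i=1..n. z t i ^ \<tau> * c i t) = (\<Sum>p\<in>P. z t p ^ \<tau> * c p t) + (\<Sum>i\<in>K. z t i ^ \<tau> * c i t)"
      unfolding P_def using K by (intro sum.subset_diff) auto
    also have "\<dots> = (\<Sum>p\<in>P. z t p ^ \<tau> * w t p) + (\<Sum>i\<in>K. z t i ^ \<tau> * v i t)"
      using K that by (auto simp: P_def c_def intro!: sum.cong arg_cong2[where f = "(+)"])
    finally show ?thesis
      using w that by simp
  qed
  then have "c \<in> vandermonde_array_code n r ell z"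
    by (auto simp: vandermonde_array_code_def array_vectors_def c_def)
  moreover have "\<forall>i\<in>K. \<forall>t<ell. c i t = v i t"
    using K by (auto simp: c_def)
  ultimately show ?thesis
    by blast
qed

lemma MDS_array_code_vandermonde:
  fixes z :: "nat \<Rightarrow> nat \<Rightarrow> 'a::{field,finite}"
  assumes "k \<le> n" and z: "\<And>t. t < ell \<Longrightarrow> inj_on (z t) {1..n}"
  shows "MDS_array_code n k ell (vandermonde_array_code n (n - k) ell z)"
    (is "MDS_array_code n k ell ?C")
proof -
  interpret vs: vector_space arr_scale
    by (rule vector_space_arr_scale)
  have C: "vs.subspace ?C"
    by (rule vandermonde_array_code_subspace)
  have "vs.dim ?C = card ({1..k} \<times> {..<ell})"
  proof (rule dim_eq_card_information_set[OF C])
    show "c = 0" if "c \<in> ?C" "\<And>i t. (i, t) \<in> {1..k} \<times> {..<ell} \<Longrightarrow> c i t = 0" for c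
      using that \<open>k \<le> n\<close> by (intro vandermonde_array_code_eq_0[OF _ z, where K = "{1..k}"]) auto
    show "\<exists>b\<in>?C. \<forall>(i, t)\<in>{1..k} \<times> {..<ell}. b i t = (if (i, t) = p then 1 else 0)" for p
    proof -
      have "\<exists>b\<in>?C. \<forall>i\<in>{1..k}. \<forall>t<ell. b i t = (if (i, t) = p then 1 else 0)"
        by (rule vandermonde_array_code_extend) (use z \<open>k \<le> n\<close> in auto)
      then obtain b where "b \<in> ?C" "\<forall>i\<in>{1..k}. \<forall>t<ell. b i t = (if (i, t) = p then 1 else 0)"
        by blast
      then show ?thesis
        by (intro bexI[of _ b]) auto
    qed
  qed simp
  moreover have "c = c'" if "K \<subseteq> {1..n}" "card K = k" "c \<in> ?C" "c' \<in> ?C" "\<forall>i\<in>K. c i = c' i"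
    for K c c'
    using vandermonde_array_code_eq_0[OF vs.subspace_diff[OF C that(3,4)] z, where K = K] that
    by (simp add: fun_eq_iff)
  ultimately show ?thesis
    unfolding MDS_array_code_def using C by (auto simp: vandermonde_array_code_def)
qed

section \<open>Repair from group sums\<close>

lemma optimal_repair_1I:
  fixes C :: "(nat \<Rightarrow> nat \<Rightarrow> 'a::zero) set"
  assumes "\<And>h R. h \<in> {1..n} \<Longrightarrow> R \<subseteq> {1..n} - {h} \<Longrightarrow> card R = d \<Longrightarrow>
      \<exists>f :: nat \<Rightarrow> (nat \<Rightarrow> 'a) \<Rightarrow> nat \<Rightarrow> 'a. \<forall>c\<in>C. \<forall>c'\<in>C.
        (\<forall>j\<in>R. \<forall>u < ell div (d - k + 1). f j (c j) u = f j (c' j) u) \<longrightarrow> c h = c' h"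
  shows "optimal_repair n k ell C 1 d"
  unfolding optimal_repair_def
proof (intro allI impI)
  fix H R assume "H \<subseteq> {1..n} \<and> card H = 1 \<and> R \<subseteq> {1..n} - H \<and> card R = d"
  then obtain h where H: "H = {h}" and hR: "h \<in> {1..n}" "R \<subseteq> {1..n} - {h}" "card R = d"
    by (auto simp: card_1_singleton_iff)
  obtain f :: "nat \<Rightarrow> (nat \<Rightarrow> 'a) \<Rightarrow> nat \<Rightarrow> 'a" where f: "\<forall>c\<in>C. \<forall>c'\<in>C.
      (\<forall>j\<in>R. \<forall>u < ell div (d - k + 1). f j (c j) u = f j (c' j) u) \<longrightarrow> c h = c' h"
    using assms[OF hR] by blast
  define msg where "msg c = (\<lambda>j u. if j \<in> R \<and> u < 1 * ell div (d - k + 1) then f j (c j) u else 0)"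
    for c :: "nat \<Rightarrow> nat \<Rightarrow> 'a"
  define g where "g M = (SOME c. c \<in> C \<and> msg c = M)" for M
  have "c h = g (msg c) h" if c: "c \<in> C" for c
  proof -
    have g: "g (msg c) \<in> C \<and> msg (g (msg c)) = msg c"
      unfolding g_def by (rule someI[of _ c]) (simp add: c)
    have "f j (c j) u = f j (g (msg c) j) u" if "j \<in> R" "u < ell div (d - k + 1)" for j u
      using fun_cong[OF fun_cong[OF conjunct2[OF g], of j], of u] that by (simp add: msg_def)
    then show ?thesis
      using f c g by blast
  qed
  then have "\<forall>c\<in>C. \<forall>i\<in>H. c i = g (msg c) i"
    by (simp add: H)
  then show "\<exists>(f :: nat \<Rightarrow> (nat \<Rightarrow> 'a) \<Rightarrow> nat \<Rightarrow> 'a) (g :: (nat \<Rightarrow> nat \<Rightarrow> 'a) \<Rightarrow> nat \<Rightarrow> nat \<Rightarrow> 'a).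
      \<forall>c\<in>C. \<forall>i\<in>H. c i = g (\<lambda>j u. if j \<in> R \<and> u < 1 * ell div (d - k + 1) then f j (c j) u else 0) i"
    unfolding msg_def by blast
qed

lemma inj_on_case_sum:
  assumes "inj_on f A" "inj_on g B" "f ` A \<inter> g ` B = {}"
  shows "inj_on (case_sum f g) (A <+> B)"
proof (rule inj_onI)
  fix x y assume "x \<in> A <+> B" "y \<in> A <+> B" "case_sum f g x = case_sum f g y"
  then show "x = y"
    using assms by (cases x; cases y) (auto dest: inj_onD)
qed

lemma vandermonde_array_code_group_sum:
  assumes c: "c \<in> vandermonde_array_code n r ell z" and "\<tau> < r" and G: "G \<subseteq> {..<ell}"
    and h: "h \<in> {1..n}" and const: "\<And>t j. t \<in> G \<Longrightarrow> j \<in> {1..n} - {h} \<Longrightarrow> z t j = z t0 j"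
  shows "(\<Sum>t\<in>G. z t h ^ \<tau> * c h t) + (\<Sum>j\<in>{1..n} - {h}. z t0 j ^ \<tau> * (\<Sum>t\<in>G. c j t)) = 0"
proof -
  have "0 = (\<Sum>t\<in>G. \<Sum>j=1..n. z t j ^ \<tau> * c j t)"
    using c G \<open>\<tau> < r\<close> by (intro sym[OF sum.neutral]) (auto simp: vandermonde_array_code_def)
  also have "\<dots> = (\<Sum>j=1..n. \<Sum>t\<in>G. z t j ^ \<tau> * c j t)"
    by (rule sum.swap)
  also have "\<dots> = (\<Sum>t\<in>G. z t h ^ \<tau> * c h t) + (\<Sum>j\<in>{1..n} - {h}. \<Sum>t\<in>G. z t j ^ \<tau> * c j t)"
    using h by (simp add: sum.remove)
  also have "(\<Sum>j\<in>{1..n} - {h}. \<Sum>t\<in>G. z t j ^ \<tau> * c j t) =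
      (\<Sum>j\<in>{1..n} - {h}. z t0 j ^ \<tau> * (\<Sum>t\<in>G. c j t))"
    using const by (auto simp: sum_distrib_left intro!: sum.cong)
  finally show ?thesis ..
qed

lemma inj_on_group_points:
  assumes z: "\<And>t. t \<in> G \<Longrightarrow> inj_on (z t) {1..n}" and h: "h \<in> {1..n}"
    and N: "N \<subseteq> {1..n} - {h}" and "t' \<in> G"
    and const: "\<And>t j. t \<in> G \<Longrightarrow> j \<in> {1..n} - {h} \<Longrightarrow> z t j = z t' j"
    and inj_h: "inj_on (\<lambda>t. z t h) G"
  shows "inj_on (case_sum (\<lambda>t. z t h) (z t')) (G <+> N)"
proof (rule inj_on_case_sum[OF inj_h])
  show "inj_on (z t') N"
    using inj_on_subset[OF z[OF \<open>t' \<in> G\<close>]] N by blast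
  have "z t h \<noteq> z t' j" if "t \<in> G" "j \<in> N" for t j
  proof -
    have j: "j \<in> {1..n} - {h}"
      using that N by auto
    have "z t j \<noteq> z t h"
      using inj_onD[OF z[OF \<open>t \<in> G\<close>], of j h] j h by auto
    then show ?thesis
      using const[OF \<open>t \<in> G\<close> j] by simp
  qed
  then show "(\<lambda>t. z t h) ` G \<inter> z t' ` N = {}"
    by blast
qed

lemma vandermonde_array_code_repair_node:
  fixes key :: "nat \<Rightarrow> nat"
  assumes e: "e \<in> vandermonde_array_code n r ell z"
    and z: "\<And>t. t < ell \<Longrightarrow> inj_on (z t) {1..n}"
    and h: "h \<in> {1..n}" and R: "R \<subseteq> {1..n} - {h}"
    and key_z: "\<And>t t' j. t < ell \<Longrightarrow> t' < ell \<Longrightarrow> key t = key t' \<Longrightarrow> j \<in> {1..n} - {h} \<Longrightarrow> z t j = z t' j"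
    and key_z_h: "\<And>t t'. t < ell \<Longrightarrow> t' < ell \<Longrightarrow> key t = key t' \<Longrightarrow> z t h = z t' h \<Longrightarrow> t = t'"
    and card: "\<And>u. card {t. t < ell \<and> key t = u} + card ({1..n} - {h} - R) \<le> r"
    and helpers: "\<And>j t'. j \<in> R \<Longrightarrow> t' < ell \<Longrightarrow> (\<Sum>t | t < ell \<and> key t = key t'. e j t) = 0"
  shows "e h t0 = 0"
proof (cases "t0 < ell")
  case False
  then show ?thesis
    using e by (simp add: vandermonde_array_code_def array_vectors_def)
next
  case True
  define G where "G = {t. t < ell \<and> key t = key t0}"
  define N where "N = {1..n} - {h} - R"
  define Y where "Y j = (\<Sum>t\<in>G. e j t)" for j
  define Z where "Z = case_sum (\<lambda>t. z t h) (z t0)"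
  define W where "W = case_sum (e h) Y"
  have G: "G \<subseteq> {..<ell}" "finite G" "t0 \<in> G"
    using True by (auto simp: G_def)
  have N: "finite N" "N \<subseteq> {1..n} - {h}"
    by (auto simp: N_def)
  have const: "z t j = z t0 j" if "t \<in> G" "j \<in> {1..n} - {h}" for t j
    using that True key_z[of t t0 j] by (simp add: G_def)
  have "inj_on (\<lambda>t. z t h) G"
    using key_z_h by (intro inj_onI) (auto simp: G_def)
  then have "inj_on Z (G <+> N)"
    unfolding Z_def using z G(1)
    by (intro inj_on_group_points[where z = z and t' = t0, OF _ h N(2) G(3) const]) auto
  moreover have "(\<Sum>x\<in>G <+> N. Z x ^ \<tau> * W x) = 0" if "\<tau> < r" for \<tau>
  proof -
    have "(\<Sum>j\<in>{1..n} - {h}. z t0 j ^ \<tau> * Y j) =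
        (\<Sum>j\<in>N. z t0 j ^ \<tau> * Y j) + (\<Sum>j\<in>R. z t0 j ^ \<tau> * Y j)"
      unfolding N_def using R by (intro sum.subset_diff) auto
    also have "(\<Sum>j\<in>R. z t0 j ^ \<tau> * Y j) = 0"
      using helpers[OF _ True] by (simp add: Y_def G_def)
    finally show ?thesis
      using vandermonde_array_code_group_sum[OF e that G(1) h const]
      by (simp add: sum.Plus G(2) N(1) Z_def W_def Y_def o_def)
  qed
  moreover have "card (G <+> N) \<le> r"
    using card[of "key t0"] G(2) N(1) by (simp add: card_Plus G_def N_def)
  ultimately have "W (Inl t0) = 0"
    using vandermonde_kernel_eq_0[of "G <+> N" Z r W "Inl t0"] G(2,3) N(1) by auto
  then show ?thesis
    by (simp add: W_def)
qed

section \<open>Digits and repair groups\<close>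

lemma digit_mod_power:
  assumes "0 < q" "1 \<le> j" "j \<le> N"
  shows "digit q (a mod q ^ N) j = digit q a j"
proof -
  have "N = (j - 1) + (N - j + 1)"
    using assms by simp
  then have q_pow: "q ^ N = q ^ (j - 1) * q ^ (N - j + 1)"
    by (metis power_add)
  have "a mod q ^ N div q ^ (j - 1) = a div q ^ (j - 1) mod q ^ (N - j + 1)"
    unfolding q_pow using \<open>0 < q\<close> by (simp add: mod_mult2_eq)
  then show ?thesis
    by (simp add: digit_def mod_mod_cancel)
qed

lemma digit_div_power:
  assumes "1 \<le> j"
  shows "digit q (a div q ^ N) j = digit q a (j + N)"
proof -
  have "j + N - 1 = N + (j - 1)"
    using assms by simp
  then show ?thesis
    by (simp add: digit_def div_mult2_eq power_add)
qed

definition delete_digit :: "nat \<Rightarrow> nat \<Rightarrow> nat \<Rightarrow> nat" where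
  "delete_digit q h a = a mod q ^ (h - 1) + q ^ (h - 1) * (a div q ^ h)"

lemma digit_decomposition:
  assumes "1 \<le> h"
  shows "a = a mod q ^ (h - 1) + q ^ (h - 1) * digit q a h + q ^ h * (a div q ^ h)"
proof -
  have q_pow: "q ^ h = q ^ (h - 1) * q"
    using assms by (simp flip: power_Suc2)
  have "a = a mod q ^ (h - 1) + q ^ (h - 1) * (a div q ^ (h - 1))"
    by simp
  also have "a div q ^ (h - 1) = digit q a h + q * (a div q ^ h)"
    unfolding q_pow digit_def by (simp add: div_mult2_eq)
  finally show ?thesis
    by (simp add: q_pow algebra_simps)
qed

lemma
  assumes "0 < q"
  shows delete_digit_mod: "delete_digit q h a mod q ^ (h - 1) = a mod q ^ (h - 1)"
    and delete_digit_div: "delete_digit q h a div q ^ (h - 1) = a div q ^ h"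
  using assms by (simp_all add: delete_digit_def)

lemma delete_digit_inj:
  assumes "0 < q" "1 \<le> h"
    and del: "delete_digit q h a = delete_digit q h a'" and dig: "digit q a h = digit q a' h"
  shows "a = a'"
proof -
  have "a mod q ^ (h - 1) = a' mod q ^ (h - 1)" "a div q ^ h = a' div q ^ h"
    using del delete_digit_mod[OF \<open>0 < q\<close>] delete_digit_div[OF \<open>0 < q\<close>] by metis+
  have "a = a mod q ^ (h - 1) + q ^ (h - 1) * digit q a h + q ^ h * (a div q ^ h)"
    by (rule digit_decomposition[OF \<open>1 \<le> h\<close>])
  also have "\<dots> = a' mod q ^ (h - 1) + q ^ (h - 1) * digit q a' h + q ^ h * (a' div q ^ h)"
    using \<open>a mod _ = _\<close> \<open>a div _ = _\<close> dig by simp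
  also have "\<dots> = a'"
    by (rule digit_decomposition[OF \<open>1 \<le> h\<close>, symmetric])
  finally show ?thesis .
qed

lemma digit_eq_if_delete_digit_eq:
  assumes "0 < q" "1 \<le> j" "j \<noteq> h" and del: "delete_digit q h a = delete_digit q h a'"
  shows "digit q a j = digit q a' j"
proof (cases "j < h")
  case True
  have "a mod q ^ (h - 1) = a' mod q ^ (h - 1)"
    using del delete_digit_mod[OF \<open>0 < q\<close>] by metis
  moreover have "j \<le> h - 1"
    using True by simp
  ultimately show ?thesis
    using digit_mod_power[OF \<open>0 < q\<close> \<open>1 \<le> j\<close>] by metis
next
  case False
  have "a div q ^ h = a' div q ^ h"
    using del delete_digit_div[OF \<open>0 < q\<close>] by metis
  moreover have "j - h + h = j" "1 \<le> j - h"
    using False assms(3) by auto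
  ultimately show ?thesis
    using digit_div_power[of "j - h" q a h] digit_div_power[of "j - h" q a' h] by simp
qed

lemma delete_digit_less:
  assumes "1 \<le> h" "h \<le> n" "a < q ^ n"
  shows "delete_digit q h a < q ^ (n - 1)"
proof -
  have q_pos: "0 < q"
    using assms by (cases q) (auto simp: power_0_left)
  have "q ^ n = q ^ h * q ^ (n - h)" "q ^ (n - 1) = q ^ (h - 1) * q ^ (n - h)"
    using assms by (simp_all flip: power_add)
  then have quot: "a div q ^ h < q ^ (n - h)"
    using assms by (simp add: div_less_iff_less_mult mult.commute q_pos)
  have "delete_digit q h a < q ^ (h - 1) * Suc (a div q ^ h)"
    using q_pos by (simp add: delete_digit_def)
  also have "\<dots> \<le> q ^ (h - 1) * q ^ (n - h)"
    using quot by (intro mult_le_mono2) simp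
  finally show ?thesis
    using \<open>q ^ (n - 1) = _\<close> by simp
qed

lemma add_mult_less_mult:
  fixes x y M N :: nat
  assumes "x < M" "y < N"
  shows "x + M * y < M * N"
proof -
  have "x + M * y < M * Suc y"
    using assms(1) by simp
  also have "\<dots> \<le> M * N"
    using assms(2) by (intro mult_le_mono2) simp
  finally show ?thesis .
qed

lemma eq_if_div_eq_mod_eq:
  fixes x y d q :: nat
  assumes "x div d = y div d" "x mod q = y mod q" "0 < d" "d \<le> q"
  shows "x = y"
proof -
  have ordered: "x = y" if "x \<le> y" "x div d = y div d" "x mod q = y mod q" for x y
  proof -
    have "x = y div d * d + x mod d" "y = y div d * d + y mod d"
      using that(2) by (metis div_mult_mod_eq)+
    then have "y - x = y mod d - x mod d"
      by linarith
    then have "y - x < q"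
      using mod_less_divisor[OF \<open>0 < d\<close>, of y] \<open>d \<le> q\<close> by linarith
    moreover have "q dvd y - x"
      using mod_eq_dvd_iff_nat[OF \<open>x \<le> y\<close>] that(3)[symmetric] by simp
    ultimately show ?thesis
      using \<open>x \<le> y\<close> by (cases "y - x = 0") (auto dest: dvd_imp_le)
  qed
  then show ?thesis
    using ordered[of x y] ordered[of y x] assms(1,2) by fastforce
qed

text \<open>For t = b * q ^ n + a we have layer_digit q n h t = b * q + a_h; the layers of one repair
  group agree in the digits a_j, j \<noteq> h, and in the block layer_digit q n h t div s'.\<close>

definition layer_digit :: "nat \<Rightarrow> nat \<Rightarrow> nat \<Rightarrow> nat \<Rightarrow> nat" where
  "layer_digit q n h t = t div q ^ n * q + digit q t h"

definition repair_group :: "nat \<Rightarrow> nat \<Rightarrow> nat \<Rightarrow> nat \<Rightarrow> nat \<Rightarrow> nat" where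
  "repair_group q n h s' t = delete_digit q h (t mod q ^ n) + q ^ (n - 1) * (layer_digit q n h t div s')"

lemma
  assumes "0 < q"
  shows layer_digit_mod: "layer_digit q n h t mod q = digit q t h"
    and layer_digit_div: "layer_digit q n h t div q = t div q ^ n"
  using assms by (simp_all add: layer_digit_def digit_def)

context
  fixes q n h s' :: nat
  assumes q: "0 < q" and h: "1 \<le> h" "h \<le> n" and s': "0 < s'"
begin

lemma repair_group_eqD:
  assumes "repair_group q n h s' t = repair_group q n h s' t'"
  shows "delete_digit q h (t mod q ^ n) = delete_digit q h (t' mod q ^ n)"
    and "layer_digit q n h t div s' = layer_digit q n h t' div s'"
proof -
  have less: "delete_digit q h (x mod q ^ n) < q ^ (n - 1)" for x
    using delete_digit_less[OF h] q by simp
  show "delete_digit q h (t mod q ^ n) = delete_digit q h (t' mod q ^ n)"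
    using arg_cong[OF assms, of "\<lambda>x. x mod q ^ (n - 1)"] less by (simp add: repair_group_def)
  show "layer_digit q n h t div s' = layer_digit q n h t' div s'"
    using arg_cong[OF assms, of "\<lambda>x. x div q ^ (n - 1)"] less q by (simp add: repair_group_def)
qed

lemma repair_group_less:
  assumes "s' dvd s * q" "t < s * q ^ n"
  shows "repair_group q n h s' t < s * q ^ n div s'"
proof -
  obtain Q where Q: "s * q = s' * Q"
    using assms(1) unfolding dvd_def by blast
  have q_pow: "q ^ n = q * q ^ (n - 1)"
    using h by (cases n) simp_all
  have "t div q ^ n < s"
    using assms(2) q by (simp add: div_less_iff_less_mult)
  have "layer_digit q n h t < q * Suc (t div q ^ n)"
    using q by (simp add: layer_digit_def digit_def)
  also have "\<dots> \<le> q * s"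
    using \<open>t div q ^ n < s\<close> by (intro mult_le_mono2) simp
  finally have "layer_digit q n h t div s' < Q"
    using s' Q by (simp add: div_less_iff_less_mult mult.commute)
  then have "repair_group q n h s' t < q ^ (n - 1) * Q"
    unfolding repair_group_def using delete_digit_less[OF h] q by (simp add: add_mult_less_mult)
  also have "q ^ (n - 1) * Q = s * q ^ n div s'"
  proof -
    have "s * q ^ n = s' * (q ^ (n - 1) * Q)"
      unfolding q_pow mult.assoc[symmetric] Q by (simp add: ac_simps)
    then show ?thesis
      using s' by simp
  qed
  finally show ?thesis .
qed

lemma digit_eq_if_repair_group_eq:
  assumes "repair_group q n h s' t = repair_group q n h s' t'" "1 \<le> j" "j \<noteq> h"
  shows "digit q (t mod q ^ n) j = digit q (t' mod q ^ n) j"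
  using digit_eq_if_delete_digit_eq[OF q assms(2,3) repair_group_eqD(1)[OF assms(1)]] .

lemma repair_group_digit_inj:
  assumes "s' \<le> q"
    and eq: "repair_group q n h s' t = repair_group q n h s' t'" and dig: "digit q t h = digit q t' h"
  shows "t = t'"
proof -
  have "layer_digit q n h t mod q = layer_digit q n h t' mod q"
    using layer_digit_mod[OF q] dig by simp
  then have "layer_digit q n h t = layer_digit q n h t'"
    by (rule eq_if_div_eq_mod_eq[OF repair_group_eqD(2)[OF eq] _ s' \<open>s' \<le> q\<close>])
  then have "t div q ^ n = t' div q ^ n"
    using layer_digit_div[OF q, of n h t] layer_digit_div[OF q, of n h t'] by simp
  moreover have "t mod q ^ n = t' mod q ^ n"
    using delete_digit_inj[OF q h(1) repair_group_eqD(1)[OF eq]] digit_mod_power[OF q h] dig by simp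
  ultimately show ?thesis
    by (metis div_mult_mod_eq)
qed

lemma card_repair_group_le:
  assumes "s' \<le> q"
  shows "card {t. t < ell \<and> repair_group q n h s' t = u} \<le> s'"
    (is "card ?G \<le> _")
proof (cases "?G = {}")
  case True
  then show ?thesis
    by (simp only: card.empty)
next
  case False
  then obtain t0 where t0: "t0 \<in> ?G"
    by blast
  define c where "c = layer_digit q n h t0 div s'"
  have "inj_on (layer_digit q n h) ?G"
  proof (rule inj_onI)
    fix t t' assume "t \<in> ?G" "t' \<in> ?G" and eq: "layer_digit q n h t = layer_digit q n h t'"
    then have "repair_group q n h s' t = repair_group q n h s' t'"
      by simp
    moreover have "digit q t h = digit q t' h"
      using layer_digit_mod[OF q, of n h t] layer_digit_mod[OF q, of n h t'] eq by simp
    ultimately show "t = t'"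
      by (rule repair_group_digit_inj[OF assms])
  qed
  then have "card ?G = card (layer_digit q n h ` ?G)"
    by (simp add: card_image)
  also have "\<dots> \<le> card {c * s' ..< c * s' + s'}"
  proof (rule card_mono)
    show "layer_digit q n h ` ?G \<subseteq> {c * s' ..< c * s' + s'}"
    proof
      fix x assume "x \<in> layer_digit q n h ` ?G"
      then have "x div s' = c"
        using t0 repair_group_eqD(2) by (auto simp: c_def)
      then show "x \<in> {c * s' ..< c * s' + s'}"
        using s' div_times_less_eq_dividend[of x s'] dividend_less_div_times[OF s', of x] by auto
    qed
  qed simp
  finally show ?thesis
    by simp
qed

end

section \<open>The layered code\<close>

lemma all_less_mult_iff:
  fixes s Q :: nat
  assumes "0 < Q"
  shows "(\<forall>t < s * Q. P t) \<longleftrightarrow> (\<forall>a < Q. \<forall>b < s. P (b * Q + a))"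
proof
  assume "\<forall>t < s * Q. P t"
  moreover have "b * Q + a < s * Q" if "a < Q" "b < s" for a b
    using add_mult_less_mult[OF that] by (simp add: ac_simps)
  ultimately show "\<forall>a < Q. \<forall>b < s. P (b * Q + a)"
    by blast
next
  assume P: "\<forall>a < Q. \<forall>b < s. P (b * Q + a)"
  show "\<forall>t < s * Q. P t"
  proof (intro allI impI)
    fix t assume "t < s * Q"
    then have "t div Q < s" "t mod Q < Q"
      using assms by (simp_all add: div_less_iff_less_mult)
    then show "P t"
      using P by (metis div_mult_mod_eq)
  qed
qed

definition layer_points :: "nat \<Rightarrow> nat \<Rightarrow> (nat \<Rightarrow> nat \<Rightarrow> 'a) \<Rightarrow> nat \<Rightarrow> nat \<Rightarrow> 'a" where
  "layer_points q n lam t i = lam i (digit q (t mod q ^ n) i)"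

lemma inj_on_layer_points:
  assumes "inj_on (\<lambda>(i, j). lam i j) ({1..n} \<times> {0..<q})" "0 < q"
  shows "inj_on (layer_points q n lam t) {1..n}"
proof (rule inj_onI)
  fix i i' assume "i \<in> {1..n}" "i' \<in> {1..n}" "layer_points q n lam t i = layer_points q n lam t i'"
  then show "i = i'"
    using inj_onD[OF assms(1), of "(i, digit q (t mod q ^ n) i)" "(i', digit q (t mod q ^ n) i')"] assms(2)
    by (simp add: layer_points_def digit_def)
qed

lemma layer_points_eq_if_repair_group_eq:
  assumes "0 < q" "1 \<le> h" "h \<le> n" "0 < s'"
    and "repair_group q n h s' t = repair_group q n h s' t'" "j \<in> {1..n} - {h}"
  shows "layer_points q n lam t j = layer_points q n lam t' j"
  using digit_eq_if_repair_group_eq[OF assms(1-5), of j] assms(6) by (simp add: layer_points_def)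

lemma repair_group_layer_points_inj:
  assumes lam: "inj_on (\<lambda>(i, j). lam i j) ({1..n} \<times> {0..<q})"
    and q: "0 < q" and h: "1 \<le> h" "h \<le> n" and s': "0 < s'" "s' \<le> q"
    and eq: "repair_group q n h s' t = repair_group q n h s' t'"
    and points: "layer_points q n lam t h = layer_points q n lam t' h"
  shows "t = t'"
proof -
  have "digit q (t mod q ^ n) h = digit q (t' mod q ^ n) h"
    using points inj_onD[OF lam, of "(h, digit q (t mod q ^ n) h)" "(h, digit q (t' mod q ^ n) h)"] h q
    by (simp add: layer_points_def digit_def)
  then show ?thesis
    using repair_group_digit_inj[OF q h s' eq] digit_mod_power[OF q h] by simp
qed

lemma vandermonde_array_code_layer_points:
  fixes lam :: "nat \<Rightarrow> nat \<Rightarrow> 'a::field"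
  assumes "0 < q"
  shows "{c \<in> array_vectors n (s * q ^ n). \<forall>a < q ^ n. \<forall>b < s. \<forall>t \<in> {1..r}.
            (\<Sum>i = 1..n. lam i (digit q a i) ^ (t - 1) * c i (b * q ^ n + a)) = 0} =
    vandermonde_array_code n r (s * q ^ n) (layer_points q n lam)"
proof -
  have shift: "(\<forall>t \<in> {1..r}. P t) \<longleftrightarrow> (\<forall>\<tau> < r. P (Suc \<tau>))" for P
    by (auto simp: less_eq_Suc_le) (metis Suc_pred' le_imp_less_Suc less_eq_Suc_le)
  have "(\<forall>t < s * q ^ n. \<forall>\<tau> < r. (\<Sum>i = 1..n. layer_points q n lam t i ^ \<tau> * c i t) = 0) \<longleftrightarrow>
      (\<forall>a < q ^ n. \<forall>b < s. \<forall>t \<in> {1..r}.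
        (\<Sum>i = 1..n. lam i (digit q a i) ^ (t - 1) * c i (b * q ^ n + a)) = 0)" for c
    unfolding all_less_mult_iff[OF zero_less_power[OF assms]] shift
    by (simp add: layer_points_def)
  then show ?thesis
    by (auto simp: vandermonde_array_code_def)
qed

lemma layer_code_repair_node:
  fixes lam :: "nat \<Rightarrow> nat \<Rightarrow> 'a::field"
  assumes lam: "inj_on (\<lambda>(i, j). lam i j) ({1..n} \<times> {0..<q})"
    and d: "k \<le> d" "d < n" "d - k + 1 \<le> q"
    and h: "h \<in> {1..n}" and R: "R \<subseteq> {1..n} - {h}" "card R = d"
    and e: "e \<in> vandermonde_array_code n (n - k) (s * q ^ n) (layer_points q n lam)"
    and helpers: "\<And>j t'. j \<in> R \<Longrightarrow> t' < s * q ^ n \<Longrightarrow>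
      (\<Sum>t | t < s * q ^ n \<and> repair_group q n h (d - k + 1) t = repair_group q n h (d - k + 1) t'. e j t) = 0"
  shows "e h t0 = 0"
proof -
  define s' where "s' = d - k + 1"
  have q: "0 < q" and s': "0 < s'" "s' \<le> q" and h': "1 \<le> h" "h \<le> n"
    using d h by (auto simp: s'_def)
  show ?thesis
  proof (rule vandermonde_array_code_repair_node[OF e _ h R(1), where key = "repair_group q n h s'"])
    show "inj_on (layer_points q n lam t) {1..n}" for t
      using inj_on_layer_points[OF lam q] .
    show "layer_points q n lam t j = layer_points q n lam t' j"
      if "repair_group q n h s' t = repair_group q n h s' t'" "j \<in> {1..n} - {h}" for t t' j
      using layer_points_eq_if_repair_group_eq[OF q h' s'(1) that] .
    show "t = t'"
      if "repair_group q n h s' t = repair_group q n h s' t'"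
        "layer_points q n lam t h = layer_points q n lam t' h" for t t'
      using repair_group_layer_points_inj[OF lam q h' s' that] .
    have "card ({1..n} - {h} - R) = n - 1 - d"
      using h R by (simp add: card_Diff_subset finite_subset)
    then show "card {t. t < s * q ^ n \<and> repair_group q n h s' t = u} + card ({1..n} - {h} - R) \<le> n - k"
      for u
      using card_repair_group_le[OF q h' s', of "s * q ^ n" u] d by (simp add: s'_def)
  qed (use helpers in \<open>simp_all add: s'_def\<close>)
qed

lemma optimal_repair_layer_code:
  fixes lam :: "nat \<Rightarrow> nat \<Rightarrow> 'a::field"
  assumes lam: "inj_on (\<lambda>(i, j). lam i j) ({1..n} \<times> {0..<q})"
    and d: "k \<le> d" "d < n" "d - k + 1 \<le> q" "(d - k + 1) dvd s * q"
  shows "optimal_repair n k (s * q ^ n)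
    (vandermonde_array_code n (n - k) (s * q ^ n) (layer_points q n lam)) 1 d"
    (is "optimal_repair n k ?ell ?C 1 d")
proof (rule optimal_repair_1I)
  interpret vs: vector_space "arr_scale :: 'a \<Rightarrow> _"
    by (rule vector_space_arr_scale)
  fix h R assume h: "h \<in> {1..n}" and R: "R \<subseteq> {1..n} - {h}" "card R = d"
  let ?key = "repair_group q n h (d - k + 1)"
  define f :: "nat \<Rightarrow> (nat \<Rightarrow> 'a) \<Rightarrow> nat \<Rightarrow> 'a" where
    "f j x u = (\<Sum>t | t < ?ell \<and> ?key t = u. x t)" for j x u
  have "c h = c' h"
    if c: "c \<in> ?C" "c' \<in> ?C" and msgs: "\<forall>j\<in>R. \<forall>u < ?ell div (d - k + 1). f j (c j) u = f j (c' j) u"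
    for c c'
  proof -
    have "(c - c') h t = 0" for t
    proof (rule layer_code_repair_node[OF lam d(1-3) h R])
      show "c - c' \<in> ?C"
        using vs.subspace_diff[OF vandermonde_array_code_subspace c] .
      show "(\<Sum>t | t < ?ell \<and> ?key t = ?key t'. (c - c') j t) = 0" if "j \<in> R" "t' < ?ell" for j t'
      proof -
        have "?key t' < ?ell div (d - k + 1)"
          using repair_group_less[OF _ _ _ _ d(4) that(2)] h d by simp
        then show ?thesis
          using msgs that(1) by (simp add: f_def sum_subtractf)
      qed
    qed
    then show ?thesis
      by (simp add: fun_eq_iff)
  qed
  then show "\<exists>f :: nat \<Rightarrow> (nat \<Rightarrow> 'a) \<Rightarrow> nat \<Rightarrow> 'a. \<forall>c\<in>?C. \<forall>c'\<in>?C.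
      (\<forall>j\<in>R. \<forall>u < ?ell div (d - k + 1). f j (c j) u = f j (c' j) u) \<longrightarrow> c h = c' h"
    by blast
qed

lemma dvd_Lcm_image_mult:
  fixes f :: "nat \<Rightarrow> 'b::semiring_Gcd"
  assumes "i \<in> {1..m}"
  shows "f i dvd Lcm (f ` {1..<m}) * f m"
proof (cases "i = m")
  case False
  then have "f i dvd Lcm (f ` {1..<m})"
    using assms by (intro dvd_Lcm) auto
  then show ?thesis
    by (rule dvd_mult2)
qed simp

theorem theorem1:
  fixes n k m :: nat
    and d :: "nat \<Rightarrow> nat"
    and lam :: "nat \<Rightarrow> nat \<Rightarrow> 'a::{field,finite}"
  assumes "1 \<le> k" and "k < n" and "1 \<le> m"
    and "k < d 1"
    and "\<And>i. 1 \<le> i \<Longrightarrow> i < m \<Longrightarrow> d i < d (Suc i)"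
    and "d m \<le> n - 1"
    and "card (UNIV :: 'a set) \<ge> (d m - k + 1) * n"
    and "inj_on (\<lambda>(i, j). lam i j) ({1..n} \<times> {0..<d m - k + 1})"
  shows
    "let r = n - k;
         sm = d m - k + 1;
         s = Lcm ((\<lambda>i. d i - k + 1) ` {1..<m});
         ell = s * sm ^ n;
         C1 = {c \<in> array_vectors n ell.
                \<forall>a < sm ^ n. \<forall>b < s. \<forall>t \<in> {1..r}.
                  (\<Sum>i = 1..n. lam i (digit sm a i) ^ (t - 1) * c i (b * sm ^ n + a)) = 0}
     in MDS_array_code n k ell C1 \<and> (\<forall>i \<in> {1..m}. optimal_repair n k ell C1 1 (d i))"
proof -
  define sm where "sm = d m - k + 1"
  define s where "s = Lcm ((\<lambda>i. d i - k + 1) ` {1..<m})"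
  have lam: "inj_on (\<lambda>(i, j). lam i j) ({1..n} \<times> {0..<sm})"
    using assms(8) by (simp add: sm_def)
  have d_mono: "d i \<le> d j" if "1 \<le> i" "i \<le> j" "j \<le> m" for i j
    using lift_Suc_mono_less_ivl[of "{1..<m}" d i j] assms(5) that by (cases "i = j") auto
  have "MDS_array_code n k (s * sm ^ n) (vandermonde_array_code n (n - k) (s * sm ^ n) (layer_points sm n lam))"
    using assms(2) inj_on_layer_points[OF lam] by (intro MDS_array_code_vandermonde) (auto simp: sm_def)
  moreover have "optimal_repair n k (s * sm ^ n)
      (vandermonde_array_code n (n - k) (s * sm ^ n) (layer_points sm n lam)) 1 (d i)"
    if i: "i \<in> {1..m}" for i
  proof -
    have "k \<le> d i" "d i < n" "d i - k + 1 \<le> sm"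
      using d_mono[of 1 i] d_mono[of i m] i assms(2,4,6) by (auto simp: sm_def)
    moreover have "(d i - k + 1) dvd s * sm"
      using dvd_Lcm_image_mult[OF i, of "\<lambda>i. d i - k + 1"] by (simp add: s_def sm_def)
    ultimately show ?thesis
      by (rule optimal_repair_layer_code[OF lam])
  qed
  moreover have "{c \<in> array_vectors n (s * sm ^ n). \<forall>a < sm ^ n. \<forall>b < s. \<forall>t \<in> {1..n - k}.
        (\<Sum>i = 1..n. lam i (digit sm a i) ^ (t - 1) * c i (b * sm ^ n + a)) = 0} =
      vandermonde_array_code n (n - k) (s * sm ^ n) (layer_points sm n lam)"
    by (rule vandermonde_array_code_layer_points) (simp add: sm_def)
  ultimately show ?thesis
    unfolding Let_def sm_def[symmetric] s_def[symmetric] by simp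
qed

end
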